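(* For every positive integer $N$, there exists an equal norm tight integer frame in $\mathcal{H}_3$ with $3N$ elements, and there exists an equal norm tight integer frame in $\mathcal{H}_3$ with $4N$ elements.
   Context: $\mathcal{H}_M$ is the real $M$-dimensional Hilbert space, identified with $\mathbb{R}^M$ via a fixed orthonormal basis. An equal norm tight integer frame (ENTIF) with $N$ elements in $\mathcal{H}_M$ is an $M\times N$ integer matrix $A$ of rank $M$ with $AA^T=\lambda I_M$ for some $\lambda>0$ and all columns of the same Euclidean norm. *)

theory Defs
  imports Complex_Main
begin

text \<open>An M x N integer matrix is represented as a function A :: nat => nat => int,
  where only the entries A i j with i < M and j < N are relevant.
  Column j is the vector (A 0 j, ..., A (M-1) j) in R^M.\<close>

definition rank_full_rows :: "nat \<Rightarrow> nat \<Rightarrow> (nat \<Rightarrow> nat \<Rightarrow> int) \<Rightarrow> bool" where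
  "rank_full_rows M N A \<longleftrightarrow>
     (\<forall>c :: nat \<Rightarrow> real. (\<forall>j<N. (\<Sum>i<M. c i * real_of_int (A i j)) = 0) \<longrightarrow> (\<forall>i<M. c i = 0))"

definition is_ENTIF :: "nat \<Rightarrow> nat \<Rightarrow> (nat \<Rightarrow> nat \<Rightarrow> int) \<Rightarrow> bool" where
  "is_ENTIF M N A \<longleftrightarrow>
     rank_full_rows M N A \<and>
     (\<exists>lam::real. lam > 0 \<and>
        (\<forall>i<M. \<forall>k<M. real_of_int (\<Sum>j<N. A i j * A k j) = (if i = k then lam else 0))) \<and>
     (\<forall>j<N. \<forall>j'<N. (\<Sum>i<M. (A i j)\<^sup>2) = (\<Sum>i<M. (A i j')\<^sup>2))"

end

theory Submission
  imports Defs
begin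

text \<open>Concatenating N copies of an equal norm tight integer frame with m elements gives one with
  m N elements: the rows stay orthogonal with the frame bound multiplied by N, the column norms
  are unchanged, and the rank cannot drop since the original columns are among the new ones.
  So it suffices to exhibit such frames in dimension 3 with 3 and with 4 elements: the standard
  basis, and the four vectors (1,1,1), (1,-1,-1), (-1,1,-1), (-1,-1,1).\<close>

definition repeat_columns :: "nat \<Rightarrow> (nat \<Rightarrow> nat \<Rightarrow> int) \<Rightarrow> nat \<Rightarrow> nat \<Rightarrow> int" where
  "repeat_columns m A = (\<lambda>i j. A i (j mod m))"

lemma sum_lessThan_mult_mod:
  fixes f :: "nat \<Rightarrow> 'a::comm_semiring_1"
  shows "(\<Sum>j<m * N. f (j mod m)) = of_nat N * (\<Sum>k<m. f k)"
proof (induction N)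
  case 0
  then show ?case by simp
next
  case (Suc N)
  have "(\<Sum>j<m * Suc N. f (j mod m)) = (\<Sum>j<m * N. f (j mod m)) + (\<Sum>j\<in>{m * N..<m * N + m}. f (j mod m))"
    by (simp add: lessThan_atLeast0 sum.atLeastLessThan_concat add.commute)
  also have "(\<Sum>j\<in>{m * N..<m * N + m}. f (j mod m)) = (\<Sum>k<m. f ((k + m * N) mod m))"
    using sum.shift_bounds_nat_ivl[of "\<lambda>j. f (j mod m)" 0 "m * N" m]
    by (simp add: add.commute lessThan_atLeast0)
  also have "\<dots> = (\<Sum>k<m. f k)"
    by simp
  finally show ?case
    using Suc by (simp add: algebra_simps)
qed

lemma rank_full_rows_repeat_columns:
  assumes "rank_full_rows M m A" and "N \<ge> 1"
  shows "rank_full_rows M (m * N) (repeat_columns m A)"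
  unfolding rank_full_rows_def
proof (intro allI impI)
  fix c :: "nat \<Rightarrow> real" and i :: nat
  assume c: "\<forall>j<m * N. (\<Sum>i<M. c i * real_of_int (repeat_columns m A i j)) = 0"
    and "i < M"
  have "\<forall>j<m. (\<Sum>i<M. c i * real_of_int (A i j)) = 0"
  proof (intro allI impI)
    fix j assume "j < m"
    moreover have "m \<le> m * N"
      using \<open>N \<ge> 1\<close> by simp
    ultimately have "j < m * N"
      by (rule less_le_trans)
    then show "(\<Sum>i<M. c i * real_of_int (A i j)) = 0"
      using c[rule_format, OF \<open>j < m * N\<close>] \<open>j < m\<close> by (simp add: repeat_columns_def)
  qed
  then show "c i = 0"
    using assms(1) \<open>i < M\<close> unfolding rank_full_rows_def by blast
qed

lemma is_ENTIF_repeat_columns: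
  assumes "is_ENTIF M m A" and "N \<ge> 1"
  shows "is_ENTIF M (m * N) (repeat_columns m A)"
proof -
  have norms: "\<forall>j<m. \<forall>j'<m. (\<Sum>i<M. (A i j)\<^sup>2) = (\<Sum>i<M. (A i j')\<^sup>2)"
    using assms(1) unfolding is_ENTIF_def by blast
  obtain lam :: real where "lam > 0" and lam:
    "\<forall>i<M. \<forall>k<M. real_of_int (\<Sum>j<m. A i j * A k j) = (if i = k then lam else 0)"
    using assms(1) unfolding is_ENTIF_def by blast
  have tight: "real_of_int (\<Sum>j<m * N. repeat_columns m A i j * repeat_columns m A k j)
      = (if i = k then real N * lam else 0)" if "i < M" "k < M" for i k
  proof -
    have "(\<Sum>j<m * N. repeat_columns m A i j * repeat_columns m A k j)
        = int N * (\<Sum>j<m. A i j * A k j)"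
      unfolding repeat_columns_def by (rule sum_lessThan_mult_mod)
    then show ?thesis
      using lam[rule_format, OF that] by simp
  qed
  have equal_norms: "(\<Sum>i<M. (repeat_columns m A i j)\<^sup>2) = (\<Sum>i<M. (repeat_columns m A i j')\<^sup>2)"
    if "j < m * N" "j' < m * N" for j j'
  proof -
    have "m > 0"
      using that by (cases m) auto
    then show ?thesis
      unfolding repeat_columns_def by (intro norms[rule_format]) simp_all
  qed
  show ?thesis
    unfolding is_ENTIF_def
  proof (intro conjI exI[of _ "real N * lam"] allI impI)
    show "rank_full_rows M (m * N) (repeat_columns m A)"
      using assms rank_full_rows_repeat_columns unfolding is_ENTIF_def by blast
    show "real N * lam > 0"
      using \<open>lam > 0\<close> \<open>N \<ge> 1\<close> by simp
  qed (blast intro: tight equal_norms)+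
qed

lemma is_ENTIF_3_3_identity:
  "is_ENTIF 3 3 (\<lambda>i j. if i = j then 1 else 0)"
proof -
  let ?I = "\<lambda>i j :: nat. if i = j then 1 else 0 :: int"
  have "rank_full_rows 3 3 ?I"
    unfolding rank_full_rows_def by (simp add: eval_nat_numeral less_Suc_eq)
  moreover have "\<forall>i<3. \<forall>k<3. real_of_int (\<Sum>j<3. ?I i j * ?I k j) = (if i = k then 1 else 0)"
    by (simp add: eval_nat_numeral less_Suc_eq)
  moreover have "\<forall>j<3. (\<Sum>i<3. (?I i j)\<^sup>2) = 1"
    by (simp add: eval_nat_numeral less_Suc_eq)
  ultimately show ?thesis
    unfolding is_ENTIF_def by (intro conjI exI[of _ 1]) simp_all
qed

definition tetrahedral_frame :: "nat \<Rightarrow> nat \<Rightarrow> int" where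
  "tetrahedral_frame i j = (if j = 0 \<or> i + 1 = j then 1 else -1)"

lemma is_ENTIF_3_4_tetrahedral_frame: "is_ENTIF 3 4 tetrahedral_frame"
proof -
  have "rank_full_rows 3 4 tetrahedral_frame"
    unfolding rank_full_rows_def
  proof (intro allI impI)
    fix c :: "nat \<Rightarrow> real" and i :: nat
    assume c: "\<forall>j<4. (\<Sum>i<3. c i * real_of_int (tetrahedral_frame i j)) = 0"
      and "i < 3"
    have "c 0 + c 1 + c 2 = 0" "c 0 - c 1 - c 2 = 0" "- c 0 + c 1 - c 2 = 0"
      using c[rule_format, of 0] c[rule_format, of 1] c[rule_format, of 2]
      by (simp_all add: eval_nat_numeral tetrahedral_frame_def)
    then have "c 0 = 0" "c 1 = 0" "c 2 = 0"
      by linarith+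
    then show "c i = 0"
      using \<open>i < 3\<close> by (auto simp: eval_nat_numeral less_Suc_eq)
  qed
  moreover have "\<forall>i<3. \<forall>k<3. real_of_int (\<Sum>j<4. tetrahedral_frame i j * tetrahedral_frame k j)
      = (if i = k then 4 else 0)"
    by (simp add: eval_nat_numeral less_Suc_eq tetrahedral_frame_def)
  moreover have "\<forall>j<4. (\<Sum>i<3. (tetrahedral_frame i j)\<^sup>2) = 3"
    by (simp add: eval_nat_numeral less_Suc_eq tetrahedral_frame_def)
  ultimately show ?thesis
    unfolding is_ENTIF_def by (intro conjI exI[of _ 4]) simp_all
qed

theorem theorem4p9:
  fixes N :: nat
  assumes "N \<ge> 1"
  shows "(\<exists>A. is_ENTIF 3 (3 * N) A) \<and> (\<exists>A. is_ENTIF 3 (4 * N) A)"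
  using is_ENTIF_repeat_columns[OF is_ENTIF_3_3_identity assms]
    is_ENTIF_repeat_columns[OF is_ENTIF_3_4_tetrahedral_frame assms]
  by blast

end
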